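(* Let $\Gamma$ and the data $s_0,\eta_0,\Xi$ be as in the context. There is a constant $c>0$ depending only on this data such that for every cusp $\gamma\xi\infty\in\mathbb R^{n-1}$ ($\gamma\in\Gamma$, $\xi\in\Xi$, $\gamma\xi\notin P$), $h(\gamma\xi\infty)\ge c$.
   Context: $n\ge2$, $G=\mathrm{SO}(n,1)$, $K\cong\mathrm{SO}(n)$ maximal compact. $A=\{a(t)\}$ a one-parameter $\mathbb R$-split torus with $\mathfrak g=\mathfrak g_{-1}\oplus\mathfrak z(A)\oplus\mathfrak g_{+1}$, $\mathrm{Ad}(a(t))=e^{\pm t}$ on $\mathfrak g_{\pm1}$; $M=Z_G(A)\cap K$, $N=\exp\mathfrak g_{+1}$, $\mathfrak g_{+1}\cong\mathbb R^{n-1}$, $u(\mathbf x)=\exp\mathbf x$; $\sigma\in K$ with $\sigma^2=e$, $\sigma a(t)\sigma^{-1}=a(-t)$; $P=MAN$. Each $g\in G\setminus P$ is $g=u(\mathbf x)\sigma ma(r)u(\mathbf y)$ with $\mathbf x,r$ unique; $\partial\mathbb H^n\cong\mathbb R^{n-1}\cup\{\infty\}$ via $u(\mathbf x)\sigma P\mapsto\mathbf x$, $P\mapsto\infty$. $\Omega(\eta,s)=\eta\{a(t):t\ge s\}K$. $\Gamma$ discrete, finite covolume, $\Gamma\backslash\mathbb H^n$ non-compact, with fixed $s_0>0$, compact $\eta_0\subset N$, finite $\Xi\ni e$ satisfying: (i) $G=\Gamma\Xi\Omega(\eta_0,s_0)$; (ii) $\Gamma\cap\xi N\xi^{-1}$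 cocompact in $\xi N\xi^{-1}$; (iii) for compact $\eta$, $\{\gamma:\gamma\Xi\Omega(\eta,s_0)\cap\Omega(\eta,s_0)\ne\emptyset\}$ finite; (iv) for compact $\eta\supseteq\eta_0$ some $s_1>s_0$ with $\gamma\xi_1\Omega(\eta,s_0)\cap\xi_2\Omega(\eta,s_1)\ne\emptyset\Rightarrow\xi_1=\xi_2,\gamma\in\xi_1NM\xi_1^{-1}$. Height: for $\gamma\xi=u(\mathbf x_1)\sigma ma(r)u(\mathbf y)$, $\gamma\xi\infty=\mathbf x_1$ and $h(\gamma\xi\infty)=e^r$. *)

theory Defs
  imports "HOL-Analysis.Analysis"
begin

(* Model: R^{n+1} = (real^'n) \<times> real, with CARD('n) = n; linear maps = bounded
   linear functions (all linear maps are bounded in finite dimension). *)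

type_synonym 'n lvec = "(real^'n) \<times> real"
type_synonym 'n lmap = "'n lvec \<Rightarrow>\<^sub>L 'n lvec"

definition lorentz_form :: "'n::finite lvec \<Rightarrow> 'n lvec \<Rightarrow> real" where
  "lorentz_form v w = fst v \<bullet> fst w - snd v * snd w"

definition O_n1 :: "'n::finite lmap set" where
  "O_n1 = {g. \<forall>v w. lorentz_form (blinfun_apply g v) (blinfun_apply g w) = lorentz_form v w}"

definition G_SOn1 :: "'n::finite lmap set" where
  "G_SOn1 = connected_component_set O_n1 id_blinfun"

definition so_n1 :: "'n::finite lmap set" where
  "so_n1 = {X. \<forall>v w. lorentz_form (blinfun_apply X v) w + lorentz_form v (blinfun_apply X w) = 0}"

fun bpow :: "'n::finite lmap \<Rightarrow> nat \<Rightarrow> 'n lmap" where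
  "bpow X 0 = id_blinfun"
| "bpow X (Suc k) = X o\<^sub>L bpow X k"

definition mexp :: "'n::finite lmap \<Rightarrow> 'n lmap" where
  "mexp X = (\<Sum>k. (1 / fact k) *\<^sub>R bpow X k)"

definition subgroup_of :: "'n::finite lmap set \<Rightarrow> 'n lmap set \<Rightarrow> bool" where
  "subgroup_of H Grp \<longleftrightarrow> H \<subseteq> Grp \<and> id_blinfun \<in> H \<and>
     (\<forall>x\<in>H. \<forall>y\<in>H. x o\<^sub>L y \<in> H) \<and>
     (\<forall>x\<in>H. \<exists>y\<in>H. x o\<^sub>L y = id_blinfun \<and> y o\<^sub>L x = id_blinfun)"

definition max_compact_subgroup :: "'n::finite lmap set \<Rightarrow> bool" where
  "max_compact_subgroup K \<longleftrightarrow> subgroup_of K G_SOn1 \<and> compact K \<and>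
     (\<forall>K'. subgroup_of K' G_SOn1 \<and> compact K' \<and> K \<subseteq> K' \<longrightarrow> K' = K)"

text \<open>Eigenspace of Ad(a(t)) with eigenvalue e^{lam t}:
  g_{+1} = ad_eig a 1, g_{-1} = ad_eig a (-1), z(A) = ad_eig a 0.\<close>
definition ad_eig :: "(real \<Rightarrow> 'n::finite lmap) \<Rightarrow> real \<Rightarrow> 'n lmap set" where
  "ad_eig a lam = {X \<in> so_n1. \<forall>t. a t o\<^sub>L X o\<^sub>L a (-t) = exp (lam * t) *\<^sub>R X}"

definition split_torus :: "(real \<Rightarrow> 'n::finite lmap) \<Rightarrow> bool" where
  "split_torus a \<longleftrightarrow> continuous_on UNIV a \<and> inj a \<and> (\<forall>t. a t \<in> G_SOn1) \<and>
     a 0 = id_blinfun \<and> (\<forall>s t. a (s + t) = a s o\<^sub>L a t) \<and>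
     (\<forall>X\<in>so_n1. \<exists>Y\<in>ad_eig a (-1). \<exists>Z\<in>ad_eig a 0. \<exists>W\<in>ad_eig a 1. X = Y + Z + W)"

definition M_grp :: "(real \<Rightarrow> 'n::finite lmap) \<Rightarrow> 'n lmap set \<Rightarrow> 'n lmap set" where
  "M_grp a K = {g \<in> G_SOn1. \<forall>t. g o\<^sub>L a t = a t o\<^sub>L g} \<inter> K"

definition N_grp :: "(real \<Rightarrow> 'n::finite lmap) \<Rightarrow> 'n lmap set" where
  "N_grp a = mexp ` ad_eig a 1"

definition P_grp :: "(real \<Rightarrow> 'n::finite lmap) \<Rightarrow> 'n lmap set \<Rightarrow> 'n lmap set" where
  "P_grp a K = {m o\<^sub>L a t o\<^sub>L u | m t u. m \<in> M_grp a K \<and> u \<in> N_grp a}"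

definition Omega :: "(real \<Rightarrow> 'n::finite lmap) \<Rightarrow> 'n lmap set \<Rightarrow> 'n lmap set \<Rightarrow> real \<Rightarrow> 'n lmap set" where
  "Omega a K eta s = {u o\<^sub>L a t o\<^sub>L k | u t k. u \<in> eta \<and> s \<le> t \<and> k \<in> K}"

definition setmul :: "'n::finite lmap set \<Rightarrow> 'n lmap set \<Rightarrow> 'n lmap set" where
  "setmul A B = {x o\<^sub>L y | x y. x \<in> A \<and> y \<in> B}"

text \<open>xi H xi^{-1}, written without inverses.\<close>
definition conj_set :: "'n::finite lmap \<Rightarrow> 'n lmap set \<Rightarrow> 'n lmap set" where
  "conj_set xi H = {h. \<exists>u\<in>H. h o\<^sub>L xi = xi o\<^sub>L u}"

definition discrete_set :: "'n::finite lmap set \<Rightarrow> bool" where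
  "discrete_set S \<longleftrightarrow> (\<forall>x\<in>S. \<exists>e>0. \<forall>y\<in>S. dist y x < e \<longrightarrow> y = x)"

text \<open>Hyperboloid model of H^n: point of the upper sheet over x \<in> R^n.
  The G-invariant volume in these coordinates is dx / sqrt(1+|x|^2).\<close>
definition hyp :: "real^'n::finite \<Rightarrow> 'n lvec" where
  "hyp x = (x, sqrt (1 + (norm x)\<^sup>2))"

definition finite_covolume :: "'n::finite lmap set \<Rightarrow> bool" where
  "finite_covolume Gam \<longleftrightarrow> (\<exists>F \<in> sets lborel.
     (\<integral>\<^sup>+ x. indicator F x * ennreal (1 / sqrt (1 + (norm x)\<^sup>2)) \<partial>(lborel :: (real^'n) measure)) < \<infinity> \<and>
     (\<forall>x. \<exists>g\<in>Gam. \<exists>y\<in>F. blinfun_apply g (hyp y) = hyp x))"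

definition compact_quotient :: "'n::finite lmap set \<Rightarrow> bool" where
  "compact_quotient Gam \<longleftrightarrow> (\<exists>C :: (real^'n) set. compact C \<and>
     (\<forall>x. \<exists>g\<in>Gam. \<exists>y\<in>C. blinfun_apply g (hyp y) = hyp x))"

definition cocompact_in :: "'n::finite lmap set \<Rightarrow> 'n lmap set \<Rightarrow> bool" where
  "cocompact_in H L \<longleftrightarrow> (\<exists>C. compact C \<and> C \<subseteq> L \<and> (\<forall>h\<in>L. \<exists>g\<in>H. \<exists>c\<in>C. h = g o\<^sub>L c))"

end

theory Submission
  imports Defs
begin

text \<open>
  If the cusp \<open>\<gamma>\<xi>\<infinity>\<close> were very low, i.e. \<open>\<gamma>\<xi> = u\<^sub>1 \<sigma> m a(r) u\<^sub>2\<close> with \<open>r\<close> very negative,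
  one could use the cocompactness of \<open>\<Gamma> \<inter> \<xi>N\<xi>\<^sup>-\<^sup>1\<close> in \<open>\<xi>N\<xi>\<^sup>-\<^sup>1\<close> to push \<open>u\<^sub>1\<close> and \<open>u\<^sub>2\<close>
  into a fixed compact \<open>\<eta> \<subseteq> N\<close> at the price of multiplying \<open>\<gamma>\<close> by elements of \<open>\<Gamma>\<close>.
  Since \<open>\<sigma>\<close> inverts \<open>A\<close>, the resulting \<open>\<Gamma>\<close>-translate of \<open>\<xi>\<Omega>(\<eta>,s\<^sub>0)\<close> meets \<open>\<Omega>(\<eta>,s\<^sub>1)\<close> as soon
  as \<open>r \<le> -(s\<^sub>0 + s\<^sub>1)\<close>. Condition (iv) then forces \<open>\<xi> = e\<close> and the translate into \<open>NM\<close>,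
  so \<open>\<gamma>\<xi> \<in> NMN \<subseteq> P\<close>. Hence \<open>h \<ge> exp (-(s\<^sub>0 + s\<^sub>1))\<close>.
  The last step needs \<open>N\<close> to be a group normalised by \<open>M\<close>; this rests on \<open>\<gg>\<^sub>+\<^sub>1\<close> being abelian,
  because \<open>[\<gg>\<^sub>+\<^sub>1, \<gg>\<^sub>+\<^sub>1] \<subseteq> \<gg>\<^sub>+\<^sub>2 = 0\<close>.
\<close>

lemma blinfun_compose_assoc [simp]: "(A o\<^sub>L B) o\<^sub>L C = A o\<^sub>L (B o\<^sub>L C)"
  by (rule blinfun_eqI) simp

lemma blinfun_compose_id [simp]: "id_blinfun o\<^sub>L A = A" "A o\<^sub>L id_blinfun = A"
  by (rule blinfun_eqI, simp)+

lemma blinfun_compose_cancel: "A o\<^sub>L B = id_blinfun \<Longrightarrow> A o\<^sub>L (B o\<^sub>L C) = C"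
  by (simp flip: blinfun_compose_assoc)

lemmas blinfun_compose_scaleR [simp] =
  bounded_bilinear.scaleR_left[OF bounded_bilinear_blinfun_compose]
  bounded_bilinear.scaleR_right[OF bounded_bilinear_blinfun_compose]

lemmas blinfun_compose_add =
  bounded_bilinear.add_left[OF bounded_bilinear_blinfun_compose]
  bounded_bilinear.add_right[OF bounded_bilinear_blinfun_compose]

lemmas blinfun_compose_diff =
  bounded_bilinear.diff_left[OF bounded_bilinear_blinfun_compose]
  bounded_bilinear.diff_right[OF bounded_bilinear_blinfun_compose]

lemmas blinfun_compose_minus =
  bounded_bilinear.minus_left[OF bounded_bilinear_blinfun_compose]
  bounded_bilinear.minus_right[OF bounded_bilinear_blinfun_compose]

subsection \<open>The matrix exponential\<close>

text \<open>The library exponential lives in Banach algebras, so \<open>mexp\<close> is transported along a copy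
  of the endomorphisms of \<open>\<real>\<^sup>n\<^sup>+\<^sup>1\<close> whose product is composition.\<close>

typedef (overloaded) 'n endo = "UNIV :: 'n::finite lmap set"
  morphisms rep_endo Endo by simp

setup_lifting type_definition_endo

instantiation endo :: (finite) real_normed_algebra_1
begin
lift_definition zero_endo :: "'a endo" is 0 .
lift_definition one_endo :: "'a endo" is id_blinfun .
lift_definition plus_endo :: "'a endo \<Rightarrow> 'a endo \<Rightarrow> 'a endo" is "(+)" .
lift_definition minus_endo :: "'a endo \<Rightarrow> 'a endo \<Rightarrow> 'a endo" is "(-)" .
lift_definition uminus_endo :: "'a endo \<Rightarrow> 'a endo" is uminus .
lift_definition times_endo :: "'a endo \<Rightarrow> 'a endo \<Rightarrow> 'a endo" is "(o\<^sub>L)" .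
lift_definition scaleR_endo :: "real \<Rightarrow> 'a endo \<Rightarrow> 'a endo" is "scaleR" .
lift_definition norm_endo :: "'a endo \<Rightarrow> real" is norm .
definition dist_endo :: "'a endo \<Rightarrow> 'a endo \<Rightarrow> real" where "dist_endo x y = norm (x - y)"
definition sgn_endo :: "'a endo \<Rightarrow> 'a endo" where "sgn_endo x = scaleR (inverse (norm x)) x"
definition uniformity_endo :: "('a endo \<times> 'a endo) filter" where
  "uniformity_endo = (INF e\<in>{0 <..}. principal {(x, y). dist x y < e})"
definition open_endo :: "'a endo set \<Rightarrow> bool" where
  "open_endo S = (\<forall>x\<in>S. \<forall>\<^sub>F (x', y) in uniformity. x' = x \<longrightarrow> y \<in> S)"
instance
proof
  fix x y z :: "'a endo" and a b :: real
  show "x + y + z = x + (y + z)" by transfer (simp add: algebra_simps)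
  show "x + y = y + x" by transfer (simp add: algebra_simps)
  show "0 + x = x" by transfer simp
  show "- x + x = 0" by transfer simp
  show "x - y = x + - y" by transfer simp
  show "a *\<^sub>R (x + y) = a *\<^sub>R x + a *\<^sub>R y" by transfer (simp add: algebra_simps)
  show "(a + b) *\<^sub>R x = a *\<^sub>R x + b *\<^sub>R x" by transfer (simp add: algebra_simps)
  show "a *\<^sub>R b *\<^sub>R x = (a * b) *\<^sub>R x" by transfer simp
  show "1 *\<^sub>R x = x" by transfer simp
  show "x * y * z = x * (y * z)" by transfer simp
  show "1 * x = x" by transfer simp
  show "x * 1 = x" by transfer simp
  show "(x + y) * z = x * z + y * z" by transfer (rule blinfun_compose_add)
  show "x * (y + z) = x * y + x * z" by transfer (rule blinfun_compose_add)
  show "(0::'a endo) \<noteq> 1"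
  proof transfer
    have "blinfun_apply (0::'a lmap) (0, 1) \<noteq> blinfun_apply id_blinfun (0, 1)"
      by (simp add: zero_prod_def)
    then show "(0::'a lmap) \<noteq> id_blinfun" by metis
  qed
  show "a *\<^sub>R x * y = a *\<^sub>R (x * y)" by transfer simp
  show "x * a *\<^sub>R y = a *\<^sub>R (x * y)" by transfer simp
  show "norm (1::'a endo) = 1" by transfer simp
  show "norm (x * y) \<le> norm x * norm y" by transfer (rule norm_blinfun_compose)
  show "dist x y = norm (x - y)" by (simp add: dist_endo_def)
  show "sgn x = inverse (norm x) *\<^sub>R x" by (simp add: sgn_endo_def)
  show "(uniformity :: ('a endo \<times> 'a endo) filter) = (INF e\<in>{0 <..}. principal {(x, y). dist x y < e})"
    by (simp add: uniformity_endo_def)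
  fix U :: "'a endo set"
  show "open U = (\<forall>x\<in>U. \<forall>\<^sub>F (x', y) in uniformity. x' = x \<longrightarrow> y \<in> U)"
    by (simp add: open_endo_def)
  show "(norm x = 0) = (x = 0)" by transfer simp
  show "norm (x + y) \<le> norm x + norm y" by transfer (rule norm_triangle_ineq)
  show "norm (a *\<^sub>R x) = \<bar>a\<bar> * norm x" by transfer simp
qed
end

lemma dist_endo_rep: "dist x y = dist (rep_endo x) (rep_endo y)"
  by (simp add: dist_endo_def dist_norm norm_endo.rep_eq minus_endo.rep_eq)

instance endo :: (finite) banach
proof
  fix X :: "nat \<Rightarrow> 'a endo"
  assume "Cauchy X"
  then have "Cauchy (\<lambda>n. rep_endo (X n))" unfolding Cauchy_def dist_endo_rep .
  then obtain L where "(\<lambda>n. rep_endo (X n)) \<longlonglongrightarrow> L" using Cauchy_convergent_iff convergent_def by blast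
  then have "X \<longlonglongrightarrow> Endo L" unfolding LIMSEQ_def dist_endo_rep by (simp add: Endo_inverse)
  then show "convergent X" by (rule convergentI)
qed

lemma rep_endo_power: "rep_endo (Endo X ^ n) = bpow X n"
  by (induction n) (simp_all add: one_endo.rep_eq times_endo.rep_eq Endo_inverse)

lemma bounded_linear_rep_endo: "bounded_linear rep_endo"
  by (rule bounded_linear_intro[where K=1]) (simp_all add: plus_endo.rep_eq scaleR_endo.rep_eq norm_endo.rep_eq)

lemma exp_Endo: "exp (Endo X) = Endo (mexp X)"
proof -
  have "rep_endo (exp (Endo X)) = (\<Sum>n. rep_endo (Endo X ^ n /\<^sub>R fact n))"
    unfolding exp_def by (rule bounded_linear.suminf[OF bounded_linear_rep_endo summable_exp_generic])
  also have "\<dots> = mexp X"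
    unfolding mexp_def by (simp add: scaleR_endo.rep_eq rep_endo_power divide_inverse_commute)
  finally show ?thesis by (metis rep_endo_inverse)
qed

lemma Endo_compose: "Endo (X o\<^sub>L Y) = Endo X * Endo Y"
  by (simp add: times_endo_def Endo_inverse)

lemma mexp_add_commuting:
  assumes "X o\<^sub>L Y = Y o\<^sub>L X"
  shows "mexp (X + Y) = mexp X o\<^sub>L mexp Y"
proof -
  have "Endo X * Endo Y = Endo Y * Endo X"
    using assms by (metis Endo_compose)
  then have "exp (Endo X + Endo Y) = exp (Endo X) * exp (Endo Y)" by (rule exp_add_commuting)
  then show ?thesis
    by (simp add: exp_Endo plus_endo_def Endo_inverse Endo_inject flip: Endo_compose)
qed

lemma mexp_zero: "mexp 0 = id_blinfun"
proof -
  have "Endo (mexp 0) = Endo id_blinfun"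
    using exp_Endo[of 0] by (simp add: zero_endo.abs_eq[symmetric] one_endo.abs_eq[symmetric])
  then show ?thesis by (simp add: Endo_inject)
qed

lemma mexp_conj:
  fixes y m X :: "'n::finite lmap"
  assumes inv: "y o\<^sub>L m = id_blinfun" "m o\<^sub>L y = id_blinfun"
  shows "y o\<^sub>L mexp X o\<^sub>L m = mexp (y o\<^sub>L X o\<^sub>L m)"
proof -
  let ?y = "Endo y" and ?m = "Endo m" and ?X = "Endo X"
  have ym: "?y * ?m = 1" and my: "?m * ?y = 1"
    using inv by (metis Endo_compose one_endo.abs_eq)+
  have power_conj: "(?y * ?X * ?m) ^ n /\<^sub>R fact n = ?y * (?X ^ n /\<^sub>R fact n) * ?m" for n
  proof -
    have "(?y * ?X * ?m) ^ n = ?y * ?X ^ n * ?m" for n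
    proof (induction n)
      case 0
      show ?case using ym by simp
    next
      case (Suc n)
      have "(?y * ?X * ?m) ^ Suc n = ?y * ?X * ?m * (?y * ?X ^ n * ?m)"
        by (simp only: power_Suc Suc.IH)
      also have "\<dots> = ?y * ?X * (?m * ?y) * ?X ^ n * ?m"
        by (simp only: mult.assoc)
      also have "\<dots> = ?y * ?X ^ Suc n * ?m"
        using my by (simp add: mult.assoc)
      finally show ?case .
    qed
    then show ?thesis by simp
  qed
  have "bounded_linear (\<lambda>Z. ?y * Z * ?m)"
    by (intro bounded_linear_intros)
  then have "?y * exp ?X * ?m = (\<Sum>n. ?y * (?X ^ n /\<^sub>R fact n) * ?m)"
    unfolding exp_def using bounded_linear.suminf[OF _ summable_exp_generic] by blast
  also have "\<dots> = exp (?y * ?X * ?m)"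
    by (simp only: exp_def power_conj)
  finally show ?thesis
    by (metis Endo_compose Endo_inject exp_Endo UNIV_I)
qed

subsection \<open>The Lorentz group and its Lie algebra\<close>

lemma lorentz_form_add [simp]:
  "lorentz_form (u + v) w = lorentz_form u w + lorentz_form v w"
  "lorentz_form w (u + v) = lorentz_form w u + lorentz_form w v"
  by (simp_all add: lorentz_form_def inner_add_left inner_add_right algebra_simps)

lemma lorentz_form_diff [simp]:
  "lorentz_form (u - v) w = lorentz_form u w - lorentz_form v w"
  "lorentz_form w (u - v) = lorentz_form w u - lorentz_form w v"
  by (simp_all add: lorentz_form_def inner_diff_left inner_diff_right algebra_simps)

lemma lorentz_form_minus [simp]:
  "lorentz_form (- u) w = - lorentz_form u w"
  "lorentz_form w (- u) = - lorentz_form w u"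
  by (simp_all add: lorentz_form_def)

lemma so_n1I:
  fixes X :: "'n::finite lmap"
  shows "(\<And>v w. lorentz_form (X v) w = - lorentz_form v (X w)) \<Longrightarrow> X \<in> so_n1"
  unfolding so_n1_def by (simp add: eq_neg_iff_add_eq_0)

lemma so_n1_skew:
  fixes X :: "'n::finite lmap"
  assumes "X \<in> so_n1"
  shows "lorentz_form (X v) w = - lorentz_form v (X w)"
proof -
  have "lorentz_form (X v) w + lorentz_form v (X w) = 0"
    using assms unfolding so_n1_def by blast
  then show ?thesis by linarith
qed

lemma so_n1_uminus: "X \<in> so_n1 \<Longrightarrow> - X \<in> so_n1"
  by (rule so_n1I) (simp add: so_n1_skew blinfun.minus_left)

lemma so_n1_add: "X \<in> so_n1 \<Longrightarrow> Y \<in> so_n1 \<Longrightarrow> X + Y \<in> so_n1"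
  by (rule so_n1I) (simp add: so_n1_skew blinfun.add_left)

lemma so_n1_commutator: "X \<in> so_n1 \<Longrightarrow> Y \<in> so_n1 \<Longrightarrow> (X o\<^sub>L Y) - (Y o\<^sub>L X) \<in> so_n1"
  by (rule so_n1I) (simp add: so_n1_skew blinfun.diff_left)

lemma O_n1_preserves: "g \<in> O_n1 \<Longrightarrow> lorentz_form (g v) (g w) = lorentz_form v w"
  unfolding O_n1_def by blast

lemma so_n1_conj:
  assumes X: "X \<in> so_n1" and m: "m \<in> O_n1" and inv: "m o\<^sub>L y = id_blinfun"
  shows "y o\<^sub>L X o\<^sub>L m \<in> so_n1"
proof -
  have my: "m (y z) = z" for z
    using arg_cong[OF inv, of "\<lambda>f. blinfun_apply f z"] by simp
  have "lorentz_form (y (X (m v))) w = - lorentz_form v (y (X (m w)))" for v w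
    using O_n1_preserves[OF m, of "y (X (m v))" w] O_n1_preserves[OF m, of v "y (X (m w))"]
      so_n1_skew[OF X, of "m v" "m w"]
    by (simp add: my)
  then show ?thesis by (intro so_n1I) simp
qed

lemma G_SOn1_subset_O_n1: "G_SOn1 \<subseteq> O_n1"
  unfolding G_SOn1_def by (rule connected_component_subset)

text \<open>Elements of \<open>O(n,1)\<close> are injective since the Lorentz form is nondegenerate:
  it pairs \<open>(x, t)\<close> with \<open>(x, -t)\<close> to \<open>|x|\<^sup>2 + t\<^sup>2\<close>.\<close>

lemma O_n1_inj: "g \<in> O_n1 \<Longrightarrow> inj (blinfun_apply g)"
proof (rule injI)
  fix x y assume g: "g \<in> O_n1" and "g x = g y"
  then have "g (x - y) = 0" by (simp add: blinfun.diff_right)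
  then have "lorentz_form (x - y) w = 0" for w
    using O_n1_preserves[OF g, of "x - y" w] by (simp add: lorentz_form_def zero_prod_def)
  then have "lorentz_form (x - y) (fst (x - y), - snd (x - y)) = 0" .
  then have "fst (x - y) \<bullet> fst (x - y) + snd (x - y) * snd (x - y) = 0"
    unfolding lorentz_form_def by (simp add: algebra_simps)
  then have "fst (x - y) = 0 \<and> snd (x - y) = 0"
    by (metis add_nonneg_eq_0_iff inner_eq_zero_iff inner_ge_zero mult_eq_0_iff zero_le_square)
  then show "x = y" by (simp add: prod_eq_iff)
qed

lemma O_n1_left_inverse:
  assumes "g \<in> O_n1" obtains L where "L o\<^sub>L g = id_blinfun"
proof -
  obtain h where h: "linear h" "h \<circ> blinfun_apply g = id"
    using linear_injective_left_inverse[OF _ O_n1_inj[OF assms]] blinfun.bounded_linear_right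
      bounded_linear.linear by blast
  then have "Blinfun h o\<^sub>L g = id_blinfun"
    by (intro blinfun_eqI) (simp add: bounded_linear_Blinfun_apply linear_conv_bounded_linear pointfree_idE)
  then show thesis by (rule that)
qed

subsection \<open>Root spaces of the split torus\<close>

lemma split_torusD:
  assumes "split_torus a"
  shows "a 0 = id_blinfun" "a (s + t) = a s o\<^sub>L a t"
    "X \<in> so_n1 \<Longrightarrow> \<exists>Y\<in>ad_eig a (-1). \<exists>Z\<in>ad_eig a 0. \<exists>W\<in>ad_eig a 1. X = Y + Z + W"
  using assms unfolding split_torus_def by blast+

lemma split_torus_inverse:
  assumes "split_torus a"
  shows "a s o\<^sub>L a (- s) = id_blinfun" "a (- s) o\<^sub>L a s = id_blinfun"
  using split_torusD(2)[OF assms, of s "- s"] split_torusD(2)[OF assms, of "- s" s]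
  by (simp_all add: split_torusD(1)[OF assms])

lemma split_torus_cancel [simp]:
  assumes "split_torus a"
  shows "a (- s) o\<^sub>L (a s o\<^sub>L Z) = Z" "a s o\<^sub>L (a (- s) o\<^sub>L Z) = Z"
  using split_torus_inverse[OF assms, of s] by (simp_all flip: blinfun_compose_assoc)

lemma ad_eigD: "X \<in> ad_eig a lam \<Longrightarrow> a t o\<^sub>L (X o\<^sub>L a (- t)) = exp (lam * t) *\<^sub>R X"
  unfolding ad_eig_def by auto

lemma ad_eig_so_n1: "X \<in> ad_eig a lam \<Longrightarrow> X \<in> so_n1"
  unfolding ad_eig_def by auto

lemma ad_eigI:
  "X \<in> so_n1 \<Longrightarrow> (\<And>t. a t o\<^sub>L (X o\<^sub>L a (- t)) = exp (lam * t) *\<^sub>R X) \<Longrightarrow> X \<in> ad_eig a lam"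
  unfolding ad_eig_def by auto

lemma ad_eig_uminus: "X \<in> ad_eig a lam \<Longrightarrow> - X \<in> ad_eig a lam"
  by (rule ad_eigI) (auto simp: so_n1_uminus ad_eig_so_n1 blinfun_compose_minus ad_eigD)

lemma ad_eig_add: "X \<in> ad_eig a lam \<Longrightarrow> Y \<in> ad_eig a lam \<Longrightarrow> X + Y \<in> ad_eig a lam"
  by (rule ad_eigI) (auto simp: so_n1_add ad_eig_so_n1 blinfun_compose_add ad_eigD scaleR_add_right)

lemma ad_eig_commutator:
  assumes tor: "split_torus a" and X: "X \<in> ad_eig a lam" and Y: "Y \<in> ad_eig a mu"
  shows "(X o\<^sub>L Y) - (Y o\<^sub>L X) \<in> ad_eig a (lam + mu)"
proof (rule ad_eigI)
  show "(X o\<^sub>L Y) - (Y o\<^sub>L X) \<in> so_n1"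
    using X Y by (intro so_n1_commutator ad_eig_so_n1)
  have Ad_compose: "a t o\<^sub>L (P o\<^sub>L (Q o\<^sub>L a (- t))) = (a t o\<^sub>L (P o\<^sub>L a (- t))) o\<^sub>L (a t o\<^sub>L (Q o\<^sub>L a (- t)))"
    for t P Q by (simp add: tor)
  fix t
  show "a t o\<^sub>L ((X o\<^sub>L Y) - (Y o\<^sub>L X) o\<^sub>L a (- t)) = exp ((lam + mu) * t) *\<^sub>R ((X o\<^sub>L Y) - (Y o\<^sub>L X))"
    unfolding blinfun_compose_diff blinfun_compose_assoc Ad_compose ad_eigD[OF X] ad_eigD[OF Y]
    by (simp add: distrib_right exp_add scaleR_diff_right)
qed

lemma tendsto_exp_neg_mult_at_top: "(c::real) < 0 \<Longrightarrow> ((\<lambda>t. exp (c * t)) \<longlongrightarrow> 0) at_top"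
  by (intro filterlim_compose[OF exp_at_bot] filterlim_tendsto_neg_mult_at_bot[OF tendsto_const]
      filterlim_ident)

text \<open>The components of \<open>X = exp (-\<lambda>t) Ad(a(t)) X\<close> along \<open>\<gg>\<^sub>-\<^sub>1, \<zz>(A), \<gg>\<^sub>+\<^sub>1\<close>
  decay as \<open>t \<rightarrow> \<infinity>\<close> when \<open>\<lambda> > 1\<close>.\<close>

lemma ad_eig_trivial:
  assumes tor: "split_torus a" and lam: "lam > 1" and X: "X \<in> ad_eig a lam"
  shows "X = 0"
proof -
  obtain A B C where A: "A \<in> ad_eig a (-1)" and B: "B \<in> ad_eig a 0" and C: "C \<in> ad_eig a 1"
    and X_eq: "X = A + B + C"
    using split_torusD(3)[OF tor ad_eig_so_n1[OF X]] by blast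
  define f where "f t = exp ((- 1 - lam) * t) *\<^sub>R A + exp (- lam * t) *\<^sub>R B + exp ((1 - lam) * t) *\<^sub>R C"
    for t
  have "f t = X" for t
  proof -
    have "exp (lam * t) *\<^sub>R X = exp (- t) *\<^sub>R A + B + exp t *\<^sub>R C"
      using ad_eigD[OF X, of t] ad_eigD[OF A, of t] ad_eigD[OF B, of t] ad_eigD[OF C, of t]
      by (simp add: X_eq blinfun_compose_add)
    then have "exp (- lam * t) *\<^sub>R (exp (- t) *\<^sub>R A + B + exp t *\<^sub>R C)
        = exp (- lam * t) *\<^sub>R (exp (lam * t) *\<^sub>R X)"
      by (simp only:)
    also have "\<dots> = X" by (simp add: mult_exp_exp)
    finally show ?thesis
      by (simp add: f_def scaleR_add_right mult_exp_exp algebra_simps)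
  qed
  then have "f = (\<lambda>t. X)" by blast
  moreover have "(f \<longlongrightarrow> 0 *\<^sub>R A + 0 *\<^sub>R B + 0 *\<^sub>R C) at_top"
    unfolding f_def using lam
    by (intro tendsto_add tendsto_scaleR tendsto_const tendsto_exp_neg_mult_at_top) auto
  ultimately show ?thesis by (simp add: tendsto_const_iff)
qed

lemma ad_eig_one_commute:
  assumes "split_torus a" "X \<in> ad_eig a 1" "Y \<in> ad_eig a 1"
  shows "X o\<^sub>L Y = Y o\<^sub>L X"
  using ad_eig_trivial[OF assms(1) _ ad_eig_commutator[OF assms]] by simp

subsection \<open>The horospherical group \<open>N\<close>\<close>

lemma N_grpE:
  assumes "u \<in> N_grp a" obtains X where "X \<in> ad_eig a 1" "u = mexp X"
  using assms unfolding N_grp_def by blast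

lemma N_grp_compose:
  assumes tor: "split_torus a" and u: "u \<in> N_grp a" and v: "v \<in> N_grp a"
  shows "u o\<^sub>L v \<in> N_grp a"
proof -
  obtain X Y where X: "X \<in> ad_eig a 1" "u = mexp X" and Y: "Y \<in> ad_eig a 1" "v = mexp Y"
    using u v by (elim N_grpE)
  have "u o\<^sub>L v = mexp (X + Y)"
    using mexp_add_commuting[OF ad_eig_one_commute[OF tor X(1) Y(1)]] X Y by simp
  then show ?thesis unfolding N_grp_def using ad_eig_add[OF X(1) Y(1)] by blast
qed

lemma N_grp_inverse:
  assumes "u \<in> N_grp a"
  obtains u' where "u' \<in> N_grp a" "u o\<^sub>L u' = id_blinfun" "u' o\<^sub>L u = id_blinfun"
proof -
  obtain X where X: "X \<in> ad_eig a 1" "u = mexp X"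
    using assms by (elim N_grpE)
  have commute: "X o\<^sub>L (- X) = (- X) o\<^sub>L X"
    by (simp add: blinfun_compose_minus)
  show thesis
  proof (rule that)
    show "mexp (- X) \<in> N_grp a" unfolding N_grp_def using ad_eig_uminus[OF X(1)] by blast
    show "u o\<^sub>L mexp (- X) = id_blinfun" "mexp (- X) o\<^sub>L u = id_blinfun"
      using mexp_add_commuting[OF commute] mexp_add_commuting[OF commute[symmetric]] X(2)
      by (simp_all add: mexp_zero)
  qed
qed

lemma N_grp_conj:
  assumes tor: "split_torus a" and m: "m \<in> O_n1" and inv: "y o\<^sub>L m = id_blinfun" "m o\<^sub>L y = id_blinfun"
    and commute: "\<And>t. m o\<^sub>L a t = a t o\<^sub>L m" and u: "u \<in> N_grp a"
  shows "y o\<^sub>L u o\<^sub>L m \<in> N_grp a"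
proof -
  obtain X where X: "X \<in> ad_eig a 1" "u = mexp X"
    using u by (elim N_grpE)
  have y_commute: "y o\<^sub>L a t = a t o\<^sub>L y" for t
  proof -
    have "y o\<^sub>L a t = y o\<^sub>L a t o\<^sub>L (m o\<^sub>L y)" using inv(2) by simp
    also have "\<dots> = y o\<^sub>L (m o\<^sub>L a t) o\<^sub>L y" by (simp add: commute)
    also have "\<dots> = a t o\<^sub>L y" using inv(1) by (simp flip: blinfun_compose_assoc)
    finally show ?thesis .
  qed
  have "a t o\<^sub>L (y o\<^sub>L Z) = y o\<^sub>L (a t o\<^sub>L Z)" for t Z
    using arg_cong[OF y_commute[of t], of "\<lambda>W. W o\<^sub>L Z"] by simp
  then have "a t o\<^sub>L (y o\<^sub>L X o\<^sub>L m o\<^sub>L a (- t)) = y o\<^sub>L (a t o\<^sub>L (X o\<^sub>L a (- t))) o\<^sub>L m" for t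
    by (simp add: commute)
  then have "y o\<^sub>L X o\<^sub>L m \<in> ad_eig a 1"
    using so_n1_conj[OF ad_eig_so_n1[OF X(1)] m inv(2)] by (intro ad_eigI) (simp_all add: ad_eigD[OF X(1)])
  moreover have "y o\<^sub>L u o\<^sub>L m = mexp (y o\<^sub>L X o\<^sub>L m)"
    using mexp_conj[OF inv] X(2) by simp
  ultimately show ?thesis unfolding N_grp_def by blast
qed

lemma subgroup_ofD:
  assumes "subgroup_of H Grp"
  shows "id_blinfun \<in> H" "x \<in> H \<Longrightarrow> y \<in> H \<Longrightarrow> x o\<^sub>L y \<in> H"
    "x \<in> H \<Longrightarrow> \<exists>y\<in>H. x o\<^sub>L y = id_blinfun \<and> y o\<^sub>L x = id_blinfun"
  using assms unfolding subgroup_of_def by blast+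

lemma M_grpD:
  assumes "m \<in> M_grp a K"
  shows "m \<in> G_SOn1" "m o\<^sub>L a t = a t o\<^sub>L m" "m \<in> K"
  using assms unfolding M_grp_def by blast+

lemma N_M_N_in_P_grp:
  assumes tor: "split_torus a" and K: "subgroup_of K G_SOn1"
    and m: "m \<in> M_grp a K" and u: "u \<in> N_grp a" and v: "v \<in> N_grp a"
  shows "u o\<^sub>L m o\<^sub>L v \<in> P_grp a K"
proof -
  obtain y where inv: "m o\<^sub>L y = id_blinfun" "y o\<^sub>L m = id_blinfun"
    using subgroup_ofD(3)[OF K M_grpD(3)[OF m]] by blast
  have "y o\<^sub>L u o\<^sub>L m \<in> N_grp a"
    using N_grp_conj[OF tor _ inv(2,1) M_grpD(2)[OF m] u] M_grpD(1)[OF m] G_SOn1_subset_O_n1 by blast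
  then have "y o\<^sub>L u o\<^sub>L m o\<^sub>L v \<in> N_grp a" by (rule N_grp_compose[OF tor _ v])
  moreover have "u o\<^sub>L m o\<^sub>L v = m o\<^sub>L a 0 o\<^sub>L (y o\<^sub>L u o\<^sub>L m o\<^sub>L v)"
    using inv(1) by (simp add: split_torusD(1)[OF tor] flip: blinfun_compose_assoc)
  ultimately show ?thesis unfolding P_grp_def using m by blast
qed

subsection \<open>Siegel sets\<close>

lemma conj_set_id [simp]: "conj_set id_blinfun H = H"
  unfolding conj_set_def by simp

lemma cocompact_conj_transversal:
  assumes cocpt: "cocompact_in (Gam \<inter> conj_set xi H) (conj_set xi H)" and xi: "xi \<in> O_n1"
  obtains C where "compact C" "C \<subseteq> H"
    "\<forall>u\<in>H. \<exists>g\<in>Gam \<inter> conj_set xi H. \<exists>w\<in>C. xi o\<^sub>L u = g o\<^sub>L xi o\<^sub>L w"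
proof -
  obtain C' where C': "compact C'" "C' \<subseteq> conj_set xi H"
    "\<forall>h\<in>conj_set xi H. \<exists>g\<in>Gam \<inter> conj_set xi H. \<exists>c\<in>C'. h = g o\<^sub>L c"
    using cocpt unfolding cocompact_in_def by blast
  obtain L where L: "L o\<^sub>L xi = id_blinfun"
    using O_n1_left_inverse[OF xi] by blast
  have pull_back: "L o\<^sub>L c o\<^sub>L xi = w" if "c o\<^sub>L xi = xi o\<^sub>L w" for c w
    using arg_cong[OF that, of "\<lambda>Z. L o\<^sub>L Z"] L by (simp flip: blinfun_compose_assoc)
  show thesis
  proof (rule that)
    show "compact ((\<lambda>c. L o\<^sub>L c o\<^sub>L xi) ` C')"
      by (rule compact_continuous_image[OF _ C'(1)]) (intro continuous_intros)
    show "(\<lambda>c. L o\<^sub>L c o\<^sub>L xi) ` C' \<subseteq> H"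
      using C'(2) pull_back unfolding conj_set_def by force
    show "\<forall>u\<in>H. \<exists>g\<in>Gam \<inter> conj_set xi H. \<exists>w\<in>(\<lambda>c. L o\<^sub>L c o\<^sub>L xi) ` C'. xi o\<^sub>L u = g o\<^sub>L xi o\<^sub>L w"
    proof
      fix u assume u: "u \<in> H"
      have "(xi o\<^sub>L u o\<^sub>L L) o\<^sub>L xi = xi o\<^sub>L u" using L by simp
      then have "xi o\<^sub>L u o\<^sub>L L \<in> conj_set xi H" unfolding conj_set_def using u by blast
      then obtain g c where g: "g \<in> Gam \<inter> conj_set xi H" and c: "c \<in> C'"
        and split: "xi o\<^sub>L u o\<^sub>L L = g o\<^sub>L c"
        using C'(3) by blast
      obtain w where w: "c o\<^sub>L xi = xi o\<^sub>L w" using C'(2) c unfolding conj_set_def by blast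
      have "xi o\<^sub>L u = g o\<^sub>L xi o\<^sub>L w"
        using arg_cong[OF split, of "\<lambda>Z. Z o\<^sub>L xi"] L w by simp
      then show "\<exists>g\<in>Gam \<inter> conj_set xi H. \<exists>w\<in>(\<lambda>c. L o\<^sub>L c o\<^sub>L xi) ` C'. xi o\<^sub>L u = g o\<^sub>L xi o\<^sub>L w"
        using g c pull_back[OF w] by blast
    qed
  qed
qed

lemma finite_cocompact_conj_transversal:
  assumes "finite Xi" "Xi \<subseteq> O_n1" "\<forall>xi\<in>Xi. cocompact_in (Gam \<inter> conj_set xi H) (conj_set xi H)"
    and "compact eta0" "eta0 \<subseteq> H"
  obtains eta where "compact eta" "eta0 \<subseteq> eta" "eta \<subseteq> H"
    "\<forall>xi\<in>Xi. \<forall>u\<in>H. \<exists>g\<in>Gam \<inter> conj_set xi H. \<exists>w\<in>eta. xi o\<^sub>L u = g o\<^sub>L xi o\<^sub>L w"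
proof -
  have "\<exists>C. compact C \<and> C \<subseteq> H \<and> (\<forall>u\<in>H. \<exists>g\<in>Gam \<inter> conj_set xi H. \<exists>w\<in>C. xi o\<^sub>L u = g o\<^sub>L xi o\<^sub>L w)"
    if xi: "xi \<in> Xi" for xi
  proof -
    have "cocompact_in (Gam \<inter> conj_set xi H) (conj_set xi H)" "xi \<in> O_n1"
      using assms(2,3) xi by blast+
    then obtain C where "compact C" "C \<subseteq> H"
      "\<forall>u\<in>H. \<exists>g\<in>Gam \<inter> conj_set xi H. \<exists>w\<in>C. xi o\<^sub>L u = g o\<^sub>L xi o\<^sub>L w"
      by (rule cocompact_conj_transversal)
    then show ?thesis by blast
  qed
  then have "\<forall>xi\<in>Xi. \<exists>C. compact C \<and> C \<subseteq> H \<and>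
      (\<forall>u\<in>H. \<exists>g\<in>Gam \<inter> conj_set xi H. \<exists>w\<in>C. xi o\<^sub>L u = g o\<^sub>L xi o\<^sub>L w)"
    by blast
  from bchoice[OF this] obtain C where C: "\<forall>xi\<in>Xi. compact (C xi) \<and> C xi \<subseteq> H \<and>
      (\<forall>u\<in>H. \<exists>g\<in>Gam \<inter> conj_set xi H. \<exists>w\<in>C xi. xi o\<^sub>L u = g o\<^sub>L xi o\<^sub>L w)"
    by blast
  show thesis
  proof (rule that[of "eta0 \<union> (\<Union>xi\<in>Xi. C xi)"])
    show "compact (eta0 \<union> (\<Union>xi\<in>Xi. C xi))"
      using assms(1,4) C by (intro compact_Un compact_UN) auto
    show "eta0 \<union> (\<Union>xi\<in>Xi. C xi) \<subseteq> H"
      using assms(5) C by blast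
    show "\<forall>xi\<in>Xi. \<forall>u\<in>H. \<exists>g\<in>Gam \<inter> conj_set xi H. \<exists>w\<in>eta0 \<union> (\<Union>xi\<in>Xi. C xi).
        xi o\<^sub>L u = g o\<^sub>L xi o\<^sub>L w"
    proof (intro ballI)
      fix xi u assume "xi \<in> Xi" "u \<in> H"
      then obtain g w where "g \<in> Gam \<inter> conj_set xi H" "w \<in> C xi" "xi o\<^sub>L u = g o\<^sub>L xi o\<^sub>L w"
        using C by blast
      then show "\<exists>g\<in>Gam \<inter> conj_set xi H. \<exists>w\<in>eta0 \<union> (\<Union>xi\<in>Xi. C xi). xi o\<^sub>L u = g o\<^sub>L xi o\<^sub>L w"
        using \<open>xi \<in> Xi\<close> by blast
    qed
  qed blast
qed

lemma low_cusp_translate_meets_Siegel_set: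
  fixes sigma :: "'n::finite lmap"
  assumes tor: "split_torus a" and K: "subgroup_of K G_SOn1" and sigma: "sigma \<in> K"
    and sigma_a: "\<And>t. sigma o\<^sub>L a t = a (- t) o\<^sub>L sigma"
    and Gam: "subgroup_of Gam G_SOn1" and e: "id_blinfun \<in> Xi"
    and transversal: "\<forall>xi\<in>Xi. \<forall>u\<in>N_grp a. \<exists>g\<in>Gam \<inter> conj_set xi (N_grp a). \<exists>w\<in>eta.
        xi o\<^sub>L u = g o\<^sub>L xi o\<^sub>L w"
    and g: "g \<in> Gam" and xi: "xi \<in> Xi" and u1: "u1 \<in> N_grp a" and u2: "u2 \<in> N_grp a"
    and m: "m \<in> M_grp a K" and g_xi: "g o\<^sub>L xi = u1 o\<^sub>L sigma o\<^sub>L m o\<^sub>L a r o\<^sub>L u2"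
    and low: "r + s0 \<le> - s1"
  obtains g1 g2 h where "g1 \<in> conj_set xi (N_grp a)" "g2 \<in> N_grp a" "h \<in> Gam"
    "g o\<^sub>L g1 = g2 o\<^sub>L h"
    "setmul {h o\<^sub>L xi} (Omega a K eta s0) \<inter> setmul {id_blinfun} (Omega a K eta s1) \<noteq> {}"
proof -
  obtain u2' where u2': "u2' \<in> N_grp a" "u2 o\<^sub>L u2' = id_blinfun"
    using N_grp_inverse[OF u2] by blast
  obtain g1 w where g1: "g1 \<in> Gam \<inter> conj_set xi (N_grp a)" and w: "w \<in> eta"
    and xi_u2': "xi o\<^sub>L u2' = g1 o\<^sub>L xi o\<^sub>L w"
    using transversal xi u2'(1) by blast
  obtain g2 c where g2: "g2 \<in> Gam \<inter> N_grp a" and c: "c \<in> eta" and u1_eq: "u1 = g2 o\<^sub>L c"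
    using transversal e u1 by fastforce
  obtain g2' where g2': "g2' \<in> Gam" "g2 o\<^sub>L g2' = id_blinfun" "g2' o\<^sub>L g2 = id_blinfun"
    using subgroup_ofD(3)[OF Gam] g2 by blast
  define h where "h = g2' o\<^sub>L g o\<^sub>L g1"
  have "h o\<^sub>L xi o\<^sub>L w = g2' o\<^sub>L (g o\<^sub>L xi) o\<^sub>L u2'"
    using xi_u2' by (simp add: h_def)
  also have "\<dots> = g2' o\<^sub>L (u1 o\<^sub>L sigma o\<^sub>L m o\<^sub>L a r o\<^sub>L u2) o\<^sub>L u2'"
    by (simp only: g_xi)
  also have "\<dots> = c o\<^sub>L sigma o\<^sub>L m o\<^sub>L a r"
    by (simp add: u1_eq blinfun_compose_cancel g2'(3) u2'(2))
  finally have h_xi_w: "h o\<^sub>L xi o\<^sub>L w = c o\<^sub>L sigma o\<^sub>L m o\<^sub>L a r" .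
  have "h o\<^sub>L xi o\<^sub>L (w o\<^sub>L a s0 o\<^sub>L id_blinfun) = c o\<^sub>L sigma o\<^sub>L (m o\<^sub>L a (r + s0))"
    using h_xi_w by (simp add: split_torusD(2)[OF tor] flip: blinfun_compose_assoc)
  also have "\<dots> = c o\<^sub>L a (- (r + s0)) o\<^sub>L (sigma o\<^sub>L m)"
    using arg_cong[OF sigma_a[of "r + s0"], of "\<lambda>W. W o\<^sub>L m"] by (simp add: M_grpD(2)[OF m])
  finally have meet: "h o\<^sub>L xi o\<^sub>L (w o\<^sub>L a s0 o\<^sub>L id_blinfun) = c o\<^sub>L a (- (r + s0)) o\<^sub>L (sigma o\<^sub>L m)" .
  show thesis
  proof (rule that)
    show "h \<in> Gam" unfolding h_def using subgroup_ofD(2)[OF Gam] g2'(1) g g1 by blast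
    show "g o\<^sub>L g1 = g2 o\<^sub>L h" using g2'(2) by (simp add: h_def flip: blinfun_compose_assoc)
    have "sigma o\<^sub>L m \<in> K" using subgroup_ofD(2)[OF K sigma M_grpD(3)[OF m]] .
    then show "setmul {h o\<^sub>L xi} (Omega a K eta s0) \<inter> setmul {id_blinfun} (Omega a K eta s1) \<noteq> {}"
      using meet w c low subgroup_ofD(1)[OF K] unfolding setmul_def Omega_def by fastforce
  qed (use g1 g2 in auto)
qed

lemma P_grp_if_translate_in_N_M:
  assumes tor: "split_torus a" and K: "subgroup_of K G_SOn1"
    and g1: "g1 \<in> N_grp a" and g2: "g2 \<in> N_grp a" and h: "h \<in> setmul (N_grp a) (M_grp a K)"
    and eq: "g o\<^sub>L g1 = g2 o\<^sub>L h"
  shows "g \<in> P_grp a K"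
proof -
  obtain n m where n: "n \<in> N_grp a" and m: "m \<in> M_grp a K" and h_eq: "h = n o\<^sub>L m"
    using h unfolding setmul_def by blast
  obtain g1' where g1': "g1' \<in> N_grp a" "g1 o\<^sub>L g1' = id_blinfun"
    using N_grp_inverse[OF g1] by blast
  have "g = g2 o\<^sub>L n o\<^sub>L m o\<^sub>L g1'"
    using arg_cong[OF eq, of "\<lambda>Z. Z o\<^sub>L g1'"] g1'(2) by (simp add: h_eq)
  then show ?thesis
    using N_M_N_in_P_grp[OF tor K m N_grp_compose[OF tor g2 n] g1'(1)] by simp
qed

lemma cusp_height_lower_bound:
  fixes sigma :: "'n::finite lmap"
  assumes tor: "split_torus a" and K: "subgroup_of K G_SOn1" and sigma: "sigma \<in> K"
    and sigma_a: "\<And>t. sigma o\<^sub>L a t = a (- t) o\<^sub>L sigma"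
    and Gam: "subgroup_of Gam G_SOn1" and e: "id_blinfun \<in> Xi"
    and transversal: "\<forall>xi\<in>Xi. \<forall>u\<in>N_grp a. \<exists>g\<in>Gam \<inter> conj_set xi (N_grp a). \<exists>w\<in>eta.
        xi o\<^sub>L u = g o\<^sub>L xi o\<^sub>L w"
    and separated: "\<forall>g\<in>Gam. \<forall>xi1\<in>Xi. \<forall>xi2\<in>Xi.
      setmul {g o\<^sub>L xi1} (Omega a K eta s0) \<inter> setmul {xi2} (Omega a K eta s1) \<noteq> {} \<longrightarrow>
      xi1 = xi2 \<and> g \<in> conj_set xi1 (setmul (N_grp a) (M_grp a K))"
    and g: "g \<in> Gam" and xi: "xi \<in> Xi" and not_P: "g o\<^sub>L xi \<notin> P_grp a K"
    and cusp: "u1 \<in> N_grp a" "u2 \<in> N_grp a" "m \<in> M_grp a K"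
      "g o\<^sub>L xi = u1 o\<^sub>L sigma o\<^sub>L m o\<^sub>L a r o\<^sub>L u2"
  shows "- (s0 + s1) \<le> r"
proof (rule ccontr)
  assume "\<not> - (s0 + s1) \<le> r"
  then have "r + s0 \<le> - s1" by simp
  then obtain g1 g2 h where g1: "g1 \<in> conj_set xi (N_grp a)" and g2: "g2 \<in> N_grp a"
    and h: "h \<in> Gam" and translate: "g o\<^sub>L g1 = g2 o\<^sub>L h"
    and meet: "setmul {h o\<^sub>L xi} (Omega a K eta s0) \<inter> setmul {id_blinfun} (Omega a K eta s1) \<noteq> {}"
    by (rule low_cusp_translate_meets_Siegel_set[OF tor K sigma sigma_a Gam e transversal g xi cusp])
  have "xi = id_blinfun" "h \<in> setmul (N_grp a) (M_grp a K)"
    using separated[rule_format, OF h xi e meet] by auto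
  then have "g \<in> P_grp a K"
    using P_grp_if_translate_in_N_M[OF tor K _ g2 _ translate] g1 by simp
  with not_P \<open>xi = id_blinfun\<close> show False by simp
qed

theorem lemma3p1:
  fixes a :: "real \<Rightarrow> 'n::finite lmap"
    and K Gam Xi eta0 :: "'n lmap set"
    and sigma :: "'n lmap"
    and s0 :: real
  assumes n2: "CARD('n) \<ge> 2"
    and torus: "split_torus a"
    and Kmax: "max_compact_subgroup K"
    and sigK: "sigma \<in> K"
    and sig2: "sigma o\<^sub>L sigma = id_blinfun"
    and siga: "\<forall>t. sigma o\<^sub>L a t o\<^sub>L sigma = a (- t)"
    and Gam_sub: "subgroup_of Gam G_SOn1"
    and Gam_disc: "discrete_set Gam"
    and Gam_covol: "finite_covolume Gam"
    and Gam_noncpt: "\<not> compact_quotient Gam"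
    and s0: "s0 > 0"
    and eta0: "compact eta0" "eta0 \<subseteq> N_grp a"
    and Xi: "finite Xi" "id_blinfun \<in> Xi" "Xi \<subseteq> G_SOn1"
    and cond_i: "G_SOn1 = setmul Gam (setmul Xi (Omega a K eta0 s0))"
    and cond_ii: "\<forall>xi\<in>Xi. cocompact_in (Gam \<inter> conj_set xi (N_grp a)) (conj_set xi (N_grp a))"
    and cond_iii: "\<forall>eta. compact eta \<and> eta \<subseteq> N_grp a \<longrightarrow>
        finite {g \<in> Gam. setmul {g} (setmul Xi (Omega a K eta s0)) \<inter> Omega a K eta s0 \<noteq> {}}"
    and cond_iv: "\<forall>eta. compact eta \<and> eta0 \<subseteq> eta \<and> eta \<subseteq> N_grp a \<longrightarrow>
        (\<exists>s1>s0. \<forall>g\<in>Gam. \<forall>xi1\<in>Xi. \<forall>xi2\<in>Xi.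
           setmul {g o\<^sub>L xi1} (Omega a K eta s0) \<inter> setmul {xi2} (Omega a K eta s1) \<noteq> {} \<longrightarrow>
           xi1 = xi2 \<and> g \<in> conj_set xi1 (setmul (N_grp a) (M_grp a K)))"
  shows "\<exists>c>0. \<forall>g\<in>Gam. \<forall>xi\<in>Xi. g o\<^sub>L xi \<notin> P_grp a K \<longrightarrow>
           (\<forall>u1 u2 m r. u1 \<in> N_grp a \<and> u2 \<in> N_grp a \<and> m \<in> M_grp a K \<and>
              g o\<^sub>L xi = u1 o\<^sub>L sigma o\<^sub>L m o\<^sub>L a r o\<^sub>L u2 \<longrightarrow> exp r \<ge> c)"
proof -
  have K: "subgroup_of K G_SOn1" using Kmax unfolding max_compact_subgroup_def by blast
  have sigma_a: "sigma o\<^sub>L a t = a (- t) o\<^sub>L sigma" for t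
    using arg_cong[OF siga[rule_format, of t], of "\<lambda>W. W o\<^sub>L sigma"] sig2
    by (simp add: blinfun_compose_cancel)
  have "Xi \<subseteq> O_n1" using Xi(3) G_SOn1_subset_O_n1 by blast
  then obtain eta where eta: "compact eta" "eta0 \<subseteq> eta" "eta \<subseteq> N_grp a"
    and transversal: "\<forall>xi\<in>Xi. \<forall>u\<in>N_grp a. \<exists>g\<in>Gam \<inter> conj_set xi (N_grp a). \<exists>w\<in>eta.
        xi o\<^sub>L u = g o\<^sub>L xi o\<^sub>L w"
    using finite_cocompact_conj_transversal[OF Xi(1) _ cond_ii eta0] by metis
  obtain s1 where separated: "\<forall>g\<in>Gam. \<forall>xi1\<in>Xi. \<forall>xi2\<in>Xi.
      setmul {g o\<^sub>L xi1} (Omega a K eta s0) \<inter> setmul {xi2} (Omega a K eta s1) \<noteq> {} \<longrightarrow>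
      xi1 = xi2 \<and> g \<in> conj_set xi1 (setmul (N_grp a) (M_grp a K))"
    using cond_iv[rule_format, OF conjI[OF eta(1) conjI[OF eta(2,3)]]] by (elim exE conjE)
  show ?thesis
  proof (intro exI[of _ "exp (- (s0 + s1))"] conjI ballI impI allI)
    fix g xi u1 u2 m r
    assume "g \<in> Gam" "xi \<in> Xi" "g o\<^sub>L xi \<notin> P_grp a K"
      and "u1 \<in> N_grp a \<and> u2 \<in> N_grp a \<and> m \<in> M_grp a K \<and> g o\<^sub>L xi = u1 o\<^sub>L sigma o\<^sub>L m o\<^sub>L a r o\<^sub>L u2"
    then have "- (s0 + s1) \<le> r"
      by (elim conjE)
        (rule cusp_height_lower_bound[OF torus K sigK sigma_a Gam_sub Xi(2) transversal separated])
    then show "exp (- (s0 + s1)) \<le> exp r" by simp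
  qed simp
qed

end
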